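(* Let $f\in\mathcal H_0$ and let $u$ solve $\partial_tu+\partial J(u)\ni0$, $u(0)=f$, with extinction time $T_{\mathrm{ex}}$. Then for $0\le t<T_{\mathrm{ex}}$: $$\|u(t)\|^{2-p}\le\|f\|^{2-p}-(2-p)\lambda_1t\quad(p<2),\qquad \|u(t)\|^2\le\|f\|^2e^{-2\lambda_1t}\quad(p=2),$$ $$\|u(t)\|^{p-2}\le\frac{1}{\|f\|^{2-p}+(p-2)\lambda_1t}\quad(p>2).$$
   Context: $\mathcal H$ is a real Hilbert space with inner product $\langle\cdot,\cdot\rangle$ and norm $\|\cdot\|$; $p\ge1$. $J:\mathcal H\to\mathbb R\cup\{\infty\}$ is convex, lower semicontinuous, proper, with dense effective domain, and absolutely $p$-homogeneous: $J(cu)=|c|^pJ(u)$ for $c\ne0$, $J(0)=0$. Standing coercivity assumption: $\lambda_1:=\inf_{u\in\mathcal H_0}pJ(u)/\|u\|^p>0$. $\partial J(u)=\{\zeta: J(u)+\langle\zeta,v-u\rangle\le J(v)\ \forall v\}$; $\mathcal N(J)=\{u:J(u)=0\}$; $\mathcal H_0:=\mathcal N(J)^\perp\setminus\{0\}$. The gradient flow solution (Brezis) is the unique continuous $u:[0,\infty)\to\mathcal H$, Lipschitz on $[\delta,\infty)$ for all $\delta>0$, right-differentiable on $(0,\infty)$ with $u(0)=f$ and $\partial_t^+u(t)=-\zeta(t)$, $\zeta(t)$ the minimal-norm element of $\partial J(u(t))$. $T_{\mathrm{ex}}:=\inf\{T>0:u(t)=0\ \forall t\ge T\}\in(0,\infty]$.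 *)

theory Defs
  imports "HOL-Analysis.Analysis" "HOL-Library.Extended_Real"
begin

text \<open>Functionals J : H -> R \<union> {infinity} are modelled as maps into ereal;
  properness excludes the value minus infinity.\<close>

definition convex_fun :: "('a::real_vector \<Rightarrow> ereal) \<Rightarrow> bool" where
  "convex_fun J \<longleftrightarrow> (\<forall>x y t. 0 < t \<and> t < 1 \<longrightarrow>
      J (t *\<^sub>R x + (1 - t) *\<^sub>R y) \<le> ereal t * J x + ereal (1 - t) * J y)"

definition lsc_fun :: "('a::topological_space \<Rightarrow> ereal) \<Rightarrow> bool" where
  "lsc_fun J \<longleftrightarrow> (\<forall>c. closed {x. J x \<le> c})"

definition proper_fun :: "('a \<Rightarrow> ereal) \<Rightarrow> bool" where
  "proper_fun J \<longleftrightarrow> (\<forall>x. J x \<noteq> -\<infinity>) \<and> (\<exists>x. J x \<noteq> \<infinity>)"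

definition eff_dom :: "('a \<Rightarrow> ereal) \<Rightarrow> 'a set" where
  "eff_dom J = {x. J x < \<infinity>}"

definition abs_homogeneous :: "real \<Rightarrow> ('a::real_vector \<Rightarrow> ereal) \<Rightarrow> bool" where
  "abs_homogeneous p J \<longleftrightarrow> J 0 = 0 \<and>
      (\<forall>c u. c \<noteq> 0 \<longrightarrow> J (c *\<^sub>R u) = ereal (\<bar>c\<bar> powr p) * J u)"

definition nullspace_J :: "('a::real_vector \<Rightarrow> ereal) \<Rightarrow> 'a set" where
  "nullspace_J J = {u. J u = 0}"

definition H0 :: "('a::real_inner \<Rightarrow> ereal) \<Rightarrow> 'a set" where
  "H0 J = {u. \<forall>n\<in>nullspace_J J. inner u n = 0} - {0}"

definition lambda1 :: "real \<Rightarrow> ('a::real_inner \<Rightarrow> ereal) \<Rightarrow> ereal" where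
  "lambda1 p J = (INF u\<in>H0 J. ereal p * J u / ereal (norm u powr p))"

definition subdiff :: "('a::real_inner \<Rightarrow> ereal) \<Rightarrow> 'a \<Rightarrow> 'a set" where
  "subdiff J u = {\<zeta>. \<forall>v. J u + ereal (inner \<zeta> (v - u)) \<le> J v}"

definition min_norm_elem :: "'a::real_normed_vector set \<Rightarrow> 'a \<Rightarrow> bool" where
  "min_norm_elem S z \<longleftrightarrow> z \<in> S \<and> (\<forall>w\<in>S. norm z \<le> norm w)"

definition gradient_flow :: "('a::real_inner \<Rightarrow> ereal) \<Rightarrow> 'a \<Rightarrow> (real \<Rightarrow> 'a) \<Rightarrow> bool" where
  "gradient_flow J f u \<longleftrightarrow>
     continuous_on {0..} u \<and>
     (\<forall>\<delta>>0. \<exists>L. L-lipschitz_on {\<delta>..} u) \<and>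
     u 0 = f \<and>
     (\<forall>t>0. \<exists>\<zeta>. min_norm_elem (subdiff J (u t)) \<zeta> \<and>
              (u has_vector_derivative (- \<zeta>)) (at t within {t..}))"

definition extinction_time :: "(real \<Rightarrow> 'a::zero) \<Rightarrow> ereal" where
  "extinction_time u = (INF T\<in>{T. T > 0 \<and> (\<forall>t\<ge>T. u t = 0)}. ereal T)"

end

theory Submission
  imports Defs
begin

(* Write zeta(t) for the subgradient with u' = -zeta. The energy ||u||^2 has right derivative
   -2 <zeta, u>. Absolute p-homogeneity gives Euler's inequality <zeta, u> >= p J(u), and
   subgradients are orthogonal to the null space of J, so the flow stays in its orthogonal
   complement, where p J(u) >= lambda1 ||u||^p. Hence phi = ||u||^2 satisfies
   phi' <= -2 lambda1 phi^(p/2) before extinction, and comparison with the Bernoulli equation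
   (the linear one for p = 2) yields the three bounds. The flow is only right differentiable,
   so monotonicity comes from nonpositive right derivatives by a real-induction argument. *)

lemma closed_right_extensible_Icc_subset:
  fixes a b :: real
  assumes "closed S" "a \<in> S"
    and step: "\<And>x. x \<in> S \<Longrightarrow> a \<le> x \<Longrightarrow> x < b \<Longrightarrow> eventually (\<lambda>y. y \<in> S) (at_right x)"
  shows "{a..b} \<subseteq> S"
proof (cases "a \<le> b")
  case ab: True
  define C where "C = {x \<in> {a..b}. {a..x} \<subseteq> S}"
  define c where "c = Sup C"
  have "a \<in> C" using ab \<open>a \<in> S\<close> by (simp add: C_def)
  have bdd: "bdd_above C" by (auto simp: C_def bdd_above_def)
  have ac: "a \<le> c" unfolding c_def using \<open>a \<in> C\<close> bdd by (rule cSup_upper)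
  have cb: "c \<le> b" unfolding c_def using \<open>a \<in> C\<close> by (intro cSup_least) (auto simp: C_def)
  have below_c: "{a..<c} \<subseteq> S"
  proof
    fix y assume y: "y \<in> {a..<c}"
    then obtain x where "x \<in> C" "y < x" using less_cSup_iff[OF _ bdd] \<open>a \<in> C\<close> by (auto simp: c_def)
    then show "y \<in> S" using y by (auto simp: C_def)
  qed
  have upto_c: "{a..c} \<subseteq> S"
  proof (cases "a = c")
    case True then show ?thesis using \<open>a \<in> S\<close> by simp
  next
    case False
    then have "closure {a..<c} = {a..c}" using ac by simp
    then show ?thesis using closure_minimal[OF below_c \<open>closed S\<close>] by simp
  qed
  have "c = b"
  proof (rule ccontr)
    assume "c \<noteq> b"
    with cb have "c < b" by simp
    have "c \<in> S" using upto_c ac by auto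
    from step[OF this ac \<open>c < b\<close>] obtain e where e: "e > c" "\<And>y. c < y \<Longrightarrow> y < e \<Longrightarrow> y \<in> S"
      by (auto simp: eventually_at_right_field)
    define y where "y = min ((c + e) / 2) b"
    have "{a..y} \<subseteq> S" using upto_c e by (fastforce simp: y_def)
    then have "y \<in> C" using ac \<open>c < b\<close> e by (auto simp: C_def y_def)
    then have "y \<le> c" unfolding c_def using bdd by (rule cSup_upper)
    then show False using \<open>c < b\<close> e by (simp add: y_def min_def split: if_splits)
  qed
  then show ?thesis using upto_c by simp
qed simp

lemma right_DERIV_eventually_less_line:
  fixes g :: "real \<Rightarrow> real"
  assumes "(g has_real_derivative D) (at x within {x..})" "D < \<eta>"
  shows "eventually (\<lambda>y. g y < g x + \<eta> * (y - x)) (at_right x)"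
proof -
  have "((\<lambda>y. (g y - g x) / (y - x)) \<longlongrightarrow> D) (at_right x)"
    using assms(1) by (simp add: has_field_derivative_iff at_within_Ici_at_right)
  then have "eventually (\<lambda>y. (g y - g x) / (y - x) < \<eta>) (at_right x)"
    using assms(2) by (rule order_tendstoD)
  then show ?thesis using eventually_at_right_less[of x]
    by eventually_elim (simp add: field_simps)
qed

lemma right_DERIV_nonpos_imp_nonincreasing:
  fixes g :: "real \<Rightarrow> real"
  assumes "a \<le> b" and cont: "continuous_on {a..b} g"
    and deriv: "\<And>x. a < x \<Longrightarrow> x < b \<Longrightarrow> (g has_real_derivative D x) (at x within {x..})"
    and nonpos: "\<And>x. a < x \<Longrightarrow> x < b \<Longrightarrow> D x \<le> 0"
  shows "g b \<le> g a"
proof (rule field_le_epsilon)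
  fix \<epsilon> :: real assume "\<epsilon> > 0"
  define \<eta> where "\<eta> = \<epsilon> / (b - a + 1)"
  have "\<eta> > 0" using \<open>\<epsilon> > 0\<close> \<open>a \<le> b\<close> by (simp add: \<eta>_def)
  \<comment> \<open>the offset \<eta> makes g a < h a strict, which replaces the missing derivative at a\<close>
  define h where "h x = g a + \<eta> * (x - a) + \<eta>" for x
  define S where "S = {a..b} \<inter> (\<lambda>x. g x - h x) -` {..0}"
  have "{a..b} \<subseteq> S"
  proof (rule closed_right_extensible_Icc_subset)
    show "closed S" unfolding S_def h_def
      by (intro continuous_closed_preimage continuous_intros cont)
    show "a \<in> S" using \<open>a \<le> b\<close> \<open>\<eta> > 0\<close> by (simp add: S_def h_def)
  next
    fix x assume "x \<in> S" "a \<le> x" "x < b"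
    have "eventually (\<lambda>y. g y < h y) (at_right x)"
    proof (cases "x = a")
      case True
      have "((\<lambda>y. g y - h y) \<longlongrightarrow> g a - h a) (at_right a)"
        using cont \<open>x < b\<close> True unfolding h_def
        by (intro tendsto_intros) (auto simp: continuous_on_def at_within_Icc_at_right[symmetric])
      moreover have "g a - h a < 0" using \<open>\<eta> > 0\<close> by (simp add: h_def)
      ultimately have "eventually (\<lambda>y. g y - h y < 0) (at_right a)"
        by (rule order_tendstoD)
      then show ?thesis using True by simp
    next
      case False
      with \<open>a \<le> x\<close> have "a < x" by simp
      have "D x < \<eta>" using nonpos[OF \<open>a < x\<close> \<open>x < b\<close>] \<open>\<eta> > 0\<close> by simp
      with deriv[OF \<open>a < x\<close> \<open>x < b\<close>] have "eventually (\<lambda>y. g y < g x + \<eta> * (y - x)) (at_right x)"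
        by (rule right_DERIV_eventually_less_line)
      moreover have "g x \<le> h x" using \<open>x \<in> S\<close> by (simp add: S_def)
      ultimately show ?thesis by (elim eventually_mono) (simp add: h_def algebra_simps)
    qed
    then show "eventually (\<lambda>y. y \<in> S) (at_right x)"
      using eventually_at_right_real[OF \<open>x < b\<close>]
      by eventually_elim (use \<open>a \<le> x\<close> in \<open>auto simp: S_def\<close>)
  qed
  then have "g b \<le> h b" using \<open>a \<le> b\<close> by (auto simp: S_def)
  also have "h b = g a + \<eta> * (b - a + 1)" by (simp add: h_def algebra_simps)
  also have "\<dots> = g a + \<epsilon>" using \<open>a \<le> b\<close> by (simp add: \<eta>_def)
  finally show "g b \<le> g a + \<epsilon>" .
qed

lemma right_DERIV_zero_imp_constant:
  fixes g :: "real \<Rightarrow> real"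
  assumes "a \<le> b" "continuous_on {a..b} g"
    and deriv: "\<And>x. a < x \<Longrightarrow> x < b \<Longrightarrow> (g has_real_derivative 0) (at x within {x..})"
  shows "g b = g a"
proof -
  have "g b \<le> g a"
    by (rule right_DERIV_nonpos_imp_nonincreasing[OF assms(1,2) deriv]) simp_all
  moreover have "- g b \<le> - g a"
  proof (rule right_DERIV_nonpos_imp_nonincreasing[OF assms(1), where D = "\<lambda>_. 0"])
    show "continuous_on {a..b} (\<lambda>x. - g x)" using assms(2) by (rule continuous_on_minus)
    fix x assume "a < x" "x < b"
    show "((\<lambda>x. - g x) has_real_derivative 0) (at x within {x..})"
      using DERIV_minus[OF deriv[OF \<open>a < x\<close> \<open>x < b\<close>]] by simp
  qed simp
  ultimately show ?thesis by simp
qed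

lemma power_ODE_comparison:
  fixes y y' :: "real \<Rightarrow> real"
  assumes "a \<le> b" "\<alpha> \<noteq> 1" and cont: "continuous_on {a..b} y" and pos: "\<And>x. x \<in> {a..b} \<Longrightarrow> 0 < y x"
    and deriv: "\<And>x. a < x \<Longrightarrow> x < b \<Longrightarrow> (y has_real_derivative y' x) (at x within {x..})"
    and ineq: "\<And>x. a < x \<Longrightarrow> x < b \<Longrightarrow> y' x \<le> - k * y x powr \<alpha>"
  shows "y b powr (1 - \<alpha>) / (1 - \<alpha>) + k * (b - a) \<le> y a powr (1 - \<alpha>) / (1 - \<alpha>)"
proof -
  define \<psi> where "\<psi> x = y x powr (1 - \<alpha>) / (1 - \<alpha>) + k * x" for x
  have "\<psi> b \<le> \<psi> a"
  proof (rule right_DERIV_nonpos_imp_nonincreasing[OF \<open>a \<le> b\<close>])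
    show "continuous_on {a..b} \<psi>" unfolding \<psi>_def
      using cont pos \<open>\<alpha> \<noteq> 1\<close> by (intro continuous_intros) (auto simp: less_imp_neq[symmetric])
  next
    fix x assume x: "a < x" "x < b"
    then have "0 < y x" using pos by simp
    have "((\<lambda>x. y x powr (1 - \<alpha>)) has_real_derivative (1 - \<alpha>) * y x powr (1 - \<alpha> - 1) * y' x)
        (at x within {x..})"
      by (rule DERIV_chain2[OF has_real_derivative_powr[OF \<open>0 < y x\<close>] deriv[OF x]])
    then have "(\<psi> has_real_derivative (1 - \<alpha>) * y x powr (1 - \<alpha> - 1) * y' x / (1 - \<alpha>) + k * 1)
        (at x within {x..})"
      unfolding \<psi>_def by (intro DERIV_add DERIV_cdivide DERIV_cmult DERIV_ident)
    then show "(\<psi> has_real_derivative y x powr (- \<alpha>) * y' x + k) (at x within {x..})"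
      by (rule DERIV_cong) (use \<open>\<alpha> \<noteq> 1\<close> in simp)
    have "y x powr (- \<alpha>) * y' x \<le> y x powr (- \<alpha>) * (- k * y x powr \<alpha>)"
      using ineq[OF x] by (rule mult_left_mono) simp
    also have "\<dots> = - k" using \<open>0 < y x\<close> by (simp add: powr_minus field_simps)
    finally show "y x powr (- \<alpha>) * y' x + k \<le> 0" by simp
  qed
  then show ?thesis by (simp add: \<psi>_def algebra_simps)
qed

lemma linear_ODE_comparison:
  fixes y y' :: "real \<Rightarrow> real"
  assumes "a \<le> b" and cont: "continuous_on {a..b} y"
    and deriv: "\<And>x. a < x \<Longrightarrow> x < b \<Longrightarrow> (y has_real_derivative y' x) (at x within {x..})"
    and ineq: "\<And>x. a < x \<Longrightarrow> x < b \<Longrightarrow> y' x \<le> - k * y x"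
  shows "y b \<le> y a * exp (- k * (b - a))"
proof -
  define \<psi> where "\<psi> x = y x * exp (k * x)" for x
  have "\<psi> b \<le> \<psi> a"
  proof (rule right_DERIV_nonpos_imp_nonincreasing[OF \<open>a \<le> b\<close>])
    show "continuous_on {a..b} \<psi>" unfolding \<psi>_def using cont by (intro continuous_intros)
  next
    fix x assume x: "a < x" "x < b"
    show "(\<psi> has_real_derivative (y' x + k * y x) * exp (k * x)) (at x within {x..})"
      unfolding \<psi>_def
      by (rule DERIV_cong, rule DERIV_mult[OF deriv[OF x]], auto intro!: derivative_eq_intros)
        (simp add: algebra_simps)
    show "(y' x + k * y x) * exp (k * x) \<le> 0"
      using ineq[OF x] by (simp add: mult_nonpos_nonneg)
  qed
  then have "y b * exp (k * b) * exp (- k * b) \<le> y a * exp (k * a) * exp (- k * b)"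
    unfolding \<psi>_def by (rule mult_right_mono) simp
  then show ?thesis by (simp add: mult.assoc exp_add[symmetric] algebra_simps)
qed

lemma norm_power_decay_comparison:
  fixes N D :: "real \<Rightarrow> real"
  assumes "0 \<le> t" "p \<noteq> 2" and cont: "continuous_on {0..t} N" and pos: "\<And>s. s \<in> {0..t} \<Longrightarrow> 0 < N s"
    and deriv: "\<And>s. 0 < s \<Longrightarrow> s < t \<Longrightarrow> ((\<lambda>r. N r ^ 2) has_real_derivative D s) (at s within {s..})"
    and ineq: "\<And>s. 0 < s \<Longrightarrow> s < t \<Longrightarrow> D s \<le> - 2 * l * N s powr p"
  shows "N t powr (2 - p) / (2 - p) + l * t \<le> N 0 powr (2 - p) / (2 - p)"
proof -
  have sq_powr: "(N s ^ 2) powr (c / 2) = N s powr c" if "s \<in> {0..t}" for s c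
  proof -
    have "N s ^ 2 = N s powr 2" using pos[OF that] by (simp add: powr_numeral)
    then show ?thesis by (simp add: powr_powr)
  qed
  have "(N t ^ 2) powr (1 - p / 2) / (1 - p / 2) + 2 * l * (t - 0)
      \<le> (N 0 ^ 2) powr (1 - p / 2) / (1 - p / 2)"
  proof (rule power_ODE_comparison[OF \<open>0 \<le> t\<close> _ _ _ deriv])
    show "p / 2 \<noteq> 1" using \<open>p \<noteq> 2\<close> by simp
    show "continuous_on {0..t} (\<lambda>r. N r ^ 2)" using cont by (intro continuous_intros)
    show "0 < N s ^ 2" if "s \<in> {0..t}" for s using pos[OF that] by simp
    fix s assume "0 < s" "s < t"
    then show "D s \<le> - (2 * l) * (N s ^ 2) powr (p / 2)"
      using ineq[of s] sq_powr[of s p] by simp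
  qed
  moreover have "1 - p / 2 = (2 - p) / 2" by simp
  ultimately show ?thesis
    using sq_powr[of t "2 - p"] sq_powr[of 0 "2 - p"] \<open>0 \<le> t\<close> by (simp add: field_simps)
qed

lemma norm_power_decay_bounds:
  fixes N D :: "real \<Rightarrow> real"
  assumes "0 \<le> t" "0 \<le> l" and cont: "continuous_on {0..t} N" and pos: "\<And>s. s \<in> {0..t} \<Longrightarrow> 0 < N s"
    and deriv: "\<And>s. 0 < s \<Longrightarrow> s < t \<Longrightarrow> ((\<lambda>r. N r ^ 2) has_real_derivative D s) (at s within {s..})"
    and ineq: "\<And>s. 0 < s \<Longrightarrow> s < t \<Longrightarrow> D s \<le> - 2 * l * N s powr p"
  shows "(p < 2 \<longrightarrow> N t powr (2 - p) \<le> N 0 powr (2 - p) - (2 - p) * l * t)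
       \<and> (p = 2 \<longrightarrow> N t ^ 2 \<le> N 0 ^ 2 * exp (- 2 * l * t))
       \<and> (p > 2 \<longrightarrow> N t powr (p - 2) \<le> 1 / (N 0 powr (2 - p) + (p - 2) * l * t))"
proof -
  consider "p = 2" | "p < 2" | "p > 2" by linarith
  then show ?thesis
  proof cases
    case 1
    have "N t ^ 2 \<le> N 0 ^ 2 * exp (- (2 * l) * (t - 0))"
    proof (rule linear_ODE_comparison[OF \<open>0 \<le> t\<close> _ deriv])
      show "continuous_on {0..t} (\<lambda>r. N r ^ 2)" using cont by (intro continuous_intros)
      fix s assume "0 < s" "s < t"
      then show "D s \<le> - (2 * l) * N s ^ 2"
        using ineq[of s] pos[of s] 1 by (simp add: powr_numeral)
    qed
    then show ?thesis using 1 by simp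
  next
    case 2
    have "(2 - p) * (N t powr (2 - p) / (2 - p) + l * t) \<le> (2 - p) * (N 0 powr (2 - p) / (2 - p))"
      using norm_power_decay_comparison[OF \<open>0 \<le> t\<close> _ cont pos deriv ineq] 2
      by (intro mult_left_mono) simp_all
    then have "N t powr (2 - p) + (2 - p) * l * t \<le> N 0 powr (2 - p)"
      using 2 by (simp add: distrib_left)
    then show ?thesis using 2 by simp
  next
    case 3
    have "(2 - p) * (N 0 powr (2 - p) / (2 - p)) \<le> (2 - p) * (N t powr (2 - p) / (2 - p) + l * t)"
      using norm_power_decay_comparison[OF \<open>0 \<le> t\<close> _ cont pos deriv ineq] 3
      by (intro mult_left_mono_neg) simp_all
    then have "N 0 powr (2 - p) \<le> N t powr (2 - p) + (2 - p) * l * t"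
      using 3 by (simp add: distrib_left)
    then have "N 0 powr (2 - p) + (p - 2) * l * t \<le> N t powr (2 - p)"
      by (simp add: algebra_simps)
    moreover have "0 < N 0 powr (2 - p) + (p - 2) * l * t"
      using \<open>0 \<le> l\<close> \<open>0 \<le> t\<close> 3 pos[of 0] by (simp add: add_pos_nonneg)
    ultimately have "1 / N t powr (2 - p) \<le> 1 / (N 0 powr (2 - p) + (p - 2) * l * t)"
      using pos[of t] \<open>0 \<le> t\<close> by (intro divide_left_mono mult_pos_pos) auto
    moreover have "N t powr (p - 2) = 1 / N t powr (2 - p)"
      using powr_minus_divide[of "N t" "2 - p"] by simp
    ultimately show ?thesis using 3 by simp
  qed
qed

lemma subdiff_nonempty_imp_real:
  assumes "proper_fun J" "\<zeta> \<in> subdiff J u"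
  shows "J u = ereal (real_of_ereal (J u))"
proof -
  obtain v where "J v \<noteq> \<infinity>" using assms(1) by (auto simp: proper_fun_def)
  moreover have "J v \<noteq> -\<infinity>" "J u \<noteq> -\<infinity>" using assms(1) by (auto simp: proper_fun_def)
  moreover have "J u + ereal (inner \<zeta> (v - u)) \<le> J v" using assms(2) by (auto simp: subdiff_def)
  ultimately show ?thesis by (auto simp: ereal_real)
qed

lemma convex_funD:
  assumes "convex_fun J" "0 < t" "t < 1"
  shows "J (t *\<^sub>R x + (1 - t) *\<^sub>R y) \<le> ereal t * J x + ereal (1 - t) * J y"
  using assms by (simp add: convex_fun_def)

lemma convex_abs_homogeneous_nonneg:
  assumes "convex_fun J" "abs_homogeneous p J"
  shows "0 \<le> J u"
proof -
  have "J ((1/2) *\<^sub>R u + (1 - 1/2) *\<^sub>R ((-1) *\<^sub>R u)) \<le> ereal (1/2) * J u + ereal (1 - 1/2) * J ((-1) *\<^sub>R u)"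
    using assms(1) by (rule convex_funD) simp_all
  also have "J ((-1) *\<^sub>R u) = J u"
    using assms(2) unfolding abs_homogeneous_def by (auto dest: spec[of _ "-1::real"])
  also have "ereal (1/2) * J u + ereal (1 - 1/2) * J u = J u" by (cases "J u") auto
  finally show ?thesis using assms(2) by (simp add: abs_homogeneous_def)
qed

lemma subdiff_inner_self_nonneg:
  assumes "\<And>v. 0 \<le> J v" "J 0 = 0" "\<zeta> \<in> subdiff J u"
  shows "0 \<le> inner \<zeta> u"
proof -
  have "J u + ereal (inner \<zeta> (0 - u)) \<le> J 0" using assms(3) unfolding subdiff_def by blast
  then show ?thesis using assms(1)[of u] assms(2) by (cases "J u") auto
qed

lemma subdiff_abs_homogeneous_Euler_le:
  assumes hom: "abs_homogeneous p J" and ju: "J u = ereal j" and \<zeta>: "\<zeta> \<in> subdiff J u"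
  shows "p * j \<le> inner \<zeta> u"
proof -
  have quotient_le: "(c powr p - 1) / (c - 1) * j \<le> inner \<zeta> u" if c: "0 < c" "c < 1" for c
  proof -
    have "J u + ereal (inner \<zeta> (c *\<^sub>R u - u)) \<le> J (c *\<^sub>R u)" using \<zeta> by (auto simp: subdiff_def)
    moreover have "J (c *\<^sub>R u) = ereal (c powr p * j)" using hom c ju by (auto simp: abs_homogeneous_def)
    ultimately have "(c - 1) * inner \<zeta> u \<le> (c powr p - 1) * j" using ju
      by (simp add: inner_diff_right algebra_simps)
    then show ?thesis using c by (simp add: divide_simps mult.commute)
  qed
  have "((\<lambda>c. c powr p) has_real_derivative p * 1 powr (p - 1)) (at 1)"
    by (auto intro!: derivative_eq_intros)
  then have "((\<lambda>c. (c powr p - 1) / (c - 1)) \<longlongrightarrow> p) (at_left 1)"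
    by (simp add: has_field_derivative_iff filterlim_at_split)
  then have "((\<lambda>c. (c powr p - 1) / (c - 1) * j) \<longlongrightarrow> p * j) (at_left 1)"
    by (intro tendsto_intros)
  moreover have "eventually (\<lambda>c. (c powr p - 1) / (c - 1) * j \<le> inner \<zeta> u) (at_left (1::real))"
    using eventually_at_left_real[OF zero_less_one] by eventually_elim (rule quotient_le, auto)
  ultimately show ?thesis by (simp add: tendsto_upperbound)
qed

lemma subdiff_orthogonal_nullspace:
  assumes conv: "convex_fun J" and hom: "abs_homogeneous p J" and ju: "J u = ereal j"
    and \<zeta>: "\<zeta> \<in> subdiff J u" and n: "n \<in> nullspace_J J"
  shows "inner \<zeta> n = 0"
proof -
  \<comment> \<open>by convexity J (u + s n) \<le> 2 powr (p - 1) * J u for every s, so s * inner \<zeta> n is bounded above\<close>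
  define K where "K = 2 powr p * j / 2 - j"
  have bounded: "s * inner \<zeta> n \<le> K" for s
  proof -
    have "J ((2 * s) *\<^sub>R n) = 0"
      using hom n by (cases "s = 0") (auto simp: abs_homogeneous_def nullspace_J_def)
    moreover have "J (2 *\<^sub>R u) = ereal (2 powr p * j)" using hom ju by (simp add: abs_homogeneous_def)
    moreover have "J ((1/2) *\<^sub>R (2 *\<^sub>R u) + (1 - 1/2) *\<^sub>R ((2 * s) *\<^sub>R n))
        \<le> ereal (1/2) * J (2 *\<^sub>R u) + ereal (1 - 1/2) * J ((2 * s) *\<^sub>R n)"
      using conv by (rule convex_funD) simp_all
    ultimately have midpoint: "J (u + s *\<^sub>R n) \<le> ereal (2 powr p * j / 2)" by (simp add: scaleR_add_right)
    have "ereal (j + s * inner \<zeta> n) = J u + ereal (inner \<zeta> (u + s *\<^sub>R n - u))" using ju by simp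
    also have "\<dots> \<le> J (u + s *\<^sub>R n)" using \<zeta> unfolding subdiff_def by blast
    also note midpoint
    finally show ?thesis by (simp add: K_def)
  qed
  show ?thesis
  proof (rule ccontr)
    assume "inner \<zeta> n \<noteq> 0"
    then have "(\<bar>K\<bar> + 1) / inner \<zeta> n * inner \<zeta> n = \<bar>K\<bar> + 1" by simp
    then show False using bounded[of "(\<bar>K\<bar> + 1) / inner \<zeta> n"] by simp
  qed
qed

lemma lambda1_mult_norm_powr_le:
  assumes "u \<in> H0 J" "J u = ereal j" "lambda1 p J \<noteq> -\<infinity>"
  shows "real_of_ereal (lambda1 p J) * norm u powr p \<le> p * j"
proof -
  have "lambda1 p J \<le> ereal p * J u / ereal (norm u powr p)"
    unfolding lambda1_def using assms(1) by (rule INF_lower)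
  also have "\<dots> = ereal (p * j / norm u powr p)" using assms(1,2) by (simp add: H0_def)
  finally have "real_of_ereal (lambda1 p J) \<le> p * j / norm u powr p"
    using assms(3) by (cases "lambda1 p J") auto
  moreover have "norm u powr p > 0" using assms(1) by (simp add: H0_def)
  ultimately show ?thesis by (simp add: divide_simps)
qed

lemma has_vector_derivative_inner_const:
  assumes "(u has_vector_derivative v) F"
  shows "((\<lambda>r. inner (u r) n) has_real_derivative inner v n) F"
proof -
  have "((\<lambda>r. inner (u r) n) has_derivative (\<lambda>h. inner (h *\<^sub>R v) n)) F"
    using assms unfolding has_vector_derivative_def by (rule has_derivative_inner_left)
  moreover have "(\<lambda>h. inner (h *\<^sub>R v) n) = (*) (inner v n)" by (auto simp: fun_eq_iff)
  ultimately show ?thesis by (simp add: has_field_derivative_def)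
qed

lemma has_vector_derivative_norm_power2:
  assumes "(u has_vector_derivative v) (at x within S)"
  shows "((\<lambda>r. norm (u r) ^ 2) has_real_derivative 2 * inner (u x) v) (at x within S)"
proof -
  have d: "(u has_derivative (\<lambda>h. h *\<^sub>R v)) (at x within S)"
    using assms by (simp add: has_vector_derivative_def)
  have "((\<lambda>r. inner (u r) (u r)) has_derivative (\<lambda>h. inner (u x) (h *\<^sub>R v) + inner (h *\<^sub>R v) (u x))) (at x within S)"
    by (rule has_derivative_inner[OF d d])
  moreover have "(\<lambda>h. inner (u x) (h *\<^sub>R v) + inner (h *\<^sub>R v) (u x)) = (*) (2 * inner (u x) v)"
    by (auto simp: inner_commute algebra_simps)
  ultimately show ?thesis by (simp add: has_field_derivative_def power2_norm_eq_inner)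
qed

locale subgradient_curve =
  fixes J :: "'a::real_inner \<Rightarrow> ereal" and u Z :: "real \<Rightarrow> 'a"
  assumes continuous: "continuous_on {0..} u"
    and subgradient: "\<And>s. 0 < s \<Longrightarrow> Z s \<in> subdiff J (u s)"
    and right_derivative: "\<And>s. 0 < s \<Longrightarrow> (u has_vector_derivative - Z s) (at s within {s..})"
begin

lemma continuous_on_Icc: "0 \<le> a \<Longrightarrow> continuous_on {a..b} u"
  using continuous by (rule continuous_on_subset) auto

lemma norm_power2_right_derivative:
  "0 < s \<Longrightarrow> ((\<lambda>r. norm (u r) ^ 2) has_real_derivative - 2 * inner (Z s) (u s)) (at s within {s..})"
  using has_vector_derivative_norm_power2[OF right_derivative] by (simp add: inner_commute)

lemma inner_orthogonal_constant:
  assumes "\<And>s. 0 < s \<Longrightarrow> inner (Z s) n = 0" "0 \<le> s"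
  shows "inner (u s) n = inner (u 0) n"
proof (rule right_DERIV_zero_imp_constant[OF \<open>0 \<le> s\<close>])
  show "continuous_on {0..s} (\<lambda>r. inner (u r) n)"
    using continuous_on_Icc[of 0 s] by (intro continuous_intros) auto
  fix x :: real assume "0 < x"
  then show "((\<lambda>r. inner (u r) n) has_real_derivative 0) (at x within {x..})"
    using has_vector_derivative_inner_const[OF right_derivative, of x n] assms(1) by simp
qed

lemma inner_subgradient_nonneg:
  assumes "convex_fun J" "abs_homogeneous p J" "0 < s"
  shows "0 \<le> inner (Z s) (u s)"
  using convex_abs_homogeneous_nonneg[OF assms(1,2)] assms(2) subgradient[OF \<open>0 < s\<close>]
  by (intro subdiff_inner_self_nonneg) (auto simp: abs_homogeneous_def)

lemma norm_nonincreasing: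
  assumes nonneg: "\<And>s. 0 < s \<Longrightarrow> 0 \<le> inner (Z s) (u s)" and "0 \<le> s" "s \<le> r"
  shows "norm (u r) \<le> norm (u s)"
proof -
  have "norm (u r) ^ 2 \<le> norm (u s) ^ 2"
  proof (rule right_DERIV_nonpos_imp_nonincreasing[OF \<open>s \<le> r\<close>])
    show "continuous_on {s..r} (\<lambda>x. norm (u x) ^ 2)"
      using continuous_on_Icc[OF \<open>0 \<le> s\<close>] by (intro continuous_intros)
    fix x assume "s < x" "x < r"
    with \<open>0 \<le> s\<close> have "0 < x" by simp
    then show "((\<lambda>x. norm (u x) ^ 2) has_real_derivative - 2 * inner (Z x) (u x)) (at x within {x..})"
      by (rule norm_power2_right_derivative)
    show "- 2 * inner (Z x) (u x) \<le> 0" using nonneg[OF \<open>0 < x\<close>] by simp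
  qed
  then show ?thesis by (meson norm_ge_zero power2_le_imp_le)
qed

lemma nonzero_before_extinction:
  assumes "\<And>s. 0 < s \<Longrightarrow> 0 \<le> inner (Z s) (u s)" "u 0 \<noteq> 0"
    and "0 \<le> s" "ereal s < extinction_time u"
  shows "u s \<noteq> 0"
proof
  assume "u s = 0"
  have vanish: "u r = 0" if "s \<le> r" for r
    using norm_nonincreasing[OF assms(1,3) that] \<open>u s = 0\<close> by simp
  have "s \<noteq> 0" using \<open>u s = 0\<close> assms(2) by auto
  with \<open>0 \<le> s\<close> have "extinction_time u \<le> ereal s"
    unfolding extinction_time_def using vanish by (intro INF_lower) auto
  with assms(4) show False by simp
qed

lemma H0_invariant:
  assumes "convex_fun J" "proper_fun J" "abs_homogeneous p J" "u 0 \<in> H0 J" "0 \<le> s" "u s \<noteq> 0"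
  shows "u s \<in> H0 J"
proof -
  have "inner (u s) n = 0" if n: "n \<in> nullspace_J J" for n
  proof -
    have "inner (Z x) n = 0" if "0 < x" for x
      using subdiff_orthogonal_nullspace[OF assms(1,3)
          subdiff_nonempty_imp_real[OF assms(2) subgradient[OF that]] subgradient[OF that] n] .
    then have "inner (u s) n = inner (u 0) n" using \<open>0 \<le> s\<close> by (rule inner_orthogonal_constant)
    then show ?thesis using assms(4) n by (simp add: H0_def)
  qed
  then show ?thesis using \<open>u s \<noteq> 0\<close> by (simp add: H0_def)
qed

end

lemma gradient_flow_subgradient_curve:
  assumes "gradient_flow J f u"
  obtains Z where "subgradient_curve J u Z"
proof -
  have "\<forall>s. \<exists>\<zeta>. 0 < s \<longrightarrow> min_norm_elem (subdiff J (u s)) \<zeta> \<and> (u has_vector_derivative - \<zeta>) (at s within {s..})"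
    using assms unfolding gradient_flow_def by blast
  then obtain Z where Z: "\<And>s. 0 < s \<Longrightarrow> min_norm_elem (subdiff J (u s)) (Z s) \<and>
      (u has_vector_derivative - Z s) (at s within {s..})"
    by metis
  have "continuous_on {0..} u" using assms unfolding gradient_flow_def by blast
  with Z show ?thesis by (intro that[of Z]) (simp add: subgradient_curve_def min_norm_elem_def)
qed

theorem corollary3:
  fixes J :: "'a::{real_inner, complete_space} \<Rightarrow> ereal"
    and p :: real and f :: 'a and u :: "real \<Rightarrow> 'a"
  assumes "p \<ge> 1"
    and "convex_fun J" and "lsc_fun J" and "proper_fun J"
    and "closure (eff_dom J) = UNIV"
    and "abs_homogeneous p J"
    and "0 < lambda1 p J"
    and "f \<in> H0 J"
    and "gradient_flow J f u"
    and "0 \<le> t" and "ereal t < extinction_time u"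
  shows "(p < 2 \<longrightarrow> norm (u t) powr (2 - p) \<le>
            norm f powr (2 - p) - (2 - p) * real_of_ereal (lambda1 p J) * t)
       \<and> (p = 2 \<longrightarrow> norm (u t) ^ 2 \<le> norm f ^ 2 * exp (- 2 * real_of_ereal (lambda1 p J) * t))
       \<and> (p > 2 \<longrightarrow> norm (u t) powr (p - 2) \<le>
            1 / (norm f powr (2 - p) + (p - 2) * real_of_ereal (lambda1 p J) * t))"
proof -
  obtain Z where "subgradient_curve J u Z" using gradient_flow_subgradient_curve[OF assms(9)] .
  then interpret subgradient_curve J u Z .
  define l where "l = real_of_ereal (lambda1 p J)"
  have "u 0 = f" using assms(9) by (simp add: gradient_flow_def)
  have nonzero: "u s \<noteq> 0" if "s \<in> {0..t}" for s
    using nonzero_before_extinction[OF inner_subgradient_nonneg[OF assms(2,6)]] that \<open>u 0 = f\<close> assms(8)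
      le_less_trans[OF _ assms(11), of "ereal s"]
    by (auto simp: H0_def)
  have decay: "- 2 * inner (Z s) (u s) \<le> - 2 * l * norm (u s) powr p" if "0 < s" "s < t" for s
  proof -
    have J_real: "J (u s) = ereal (real_of_ereal (J (u s)))"
      using subdiff_nonempty_imp_real[OF assms(4) subgradient[OF \<open>0 < s\<close>]] .
    have "u s \<in> H0 J" using H0_invariant[OF assms(2,4,6)] nonzero that \<open>u 0 = f\<close> assms(8) by simp
    then have "l * norm (u s) powr p \<le> p * real_of_ereal (J (u s))"
      unfolding l_def using assms(7) by (intro lambda1_mult_norm_powr_le J_real) auto
    also have "\<dots> \<le> inner (Z s) (u s)"
      using subdiff_abs_homogeneous_Euler_le[OF assms(6) J_real subgradient[OF \<open>0 < s\<close>]] .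
    finally show ?thesis by simp
  qed
  have "0 \<le> l" using assms(7) by (simp add: l_def real_of_ereal_pos)
  from norm_power_decay_bounds[OF assms(10) this _ _ norm_power2_right_derivative decay]
  show ?thesis unfolding l_def[symmetric]
    using nonzero continuous_on_Icc[of 0 t] \<open>u 0 = f\<close> by (simp add: continuous_on_norm)
qed

end
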